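(* Let $X$ satisfy the IHR assumption with hazard-rate lower bound $L>0$, let $n\ge 2$, let $X_1,\dots,X_n$ be i.i.d. copies of $X$ with order statistics $X_{(1)}\ge\cdots\ge X_{(n)}$, and let $k\in\{2,\dots,n\}$. Define $v^l:=\frac{2(n-k+1)}{(k-1)^2L^2}$. Then for all $\lambda\ge 0$, $$\log \mathbb{E}\big[\exp\big(\lambda(\mathbb{E}[X_{(k)}]-X_{(k)})\big)\big]\le \frac{\lambda^2 v^l}{2},$$ and for all $\gamma\ge 0$, $$\mathbb{P}\Big(\mathbb{E}[X_{(k)}]-X_{(k)}\ge \sqrt{2v^l\gamma}\Big)\le e^{-\gamma}.$$
   Context: $X$ is a continuous real random variable with support $[0,\infty)$, density $f$ and c.d.f. $F$. Its hazard rate is $h(x)=f(x)/(1-F(x))$. IHR assumption: $h$ is non-decreasing on $[0,\infty)$ (i.e. $h(x_1)\ge h(x_2)$ whenever $x_1\ge x_2\ge 0$) and $L:=\inf_x h(x)>0$. For i.i.d. samples $X_1,\dots,X_n$, the order statistics $X_{(1)}\ge X_{(2)}\ge\cdots\ge X_{(n)}$ are the samples sorted in decreasing order ($X_{(1)}$ is the maximum); $X_{(k)}$ is called the rank-$k$ order statistic. *)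

theory Defs
  imports "HOL-Probability.Probability"
begin

text \<open>Rank-k order statistic (in decreasing order, rank 1 = maximum) of the
  values x 0, ..., x (n-1).\<close>
definition order_stat :: "nat \<Rightarrow> nat \<Rightarrow> (nat \<Rightarrow> real) \<Rightarrow> real" where
  "order_stat n k x = rev (sort (map x [0..<n])) ! (k - 1)"

definition cdf_of_density :: "(real \<Rightarrow> real) \<Rightarrow> real \<Rightarrow> real" where
  "cdf_of_density f x = measure (density lborel (\<lambda>t. ennreal (f t))) {..x}"

definition hazard :: "(real \<Rightarrow> real) \<Rightarrow> real \<Rightarrow> real" where
  "hazard f x = f x / (1 - cdf_of_density f x)"

end

theory Submission
  imports Defs
begin

text \<open>Write \<open>X = \<psi> E\<close> with \<open>E\<close> standard exponential and \<open>\<psi>\<close> the quantile transform. Since the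
  hazard rate is at least \<open>L\<close>, the survival function decays at least like \<open>exp (- L z)\<close>, so \<open>\<psi>\<close> is
  monotone and \<open>1/L\<close>-Lipschitz, and the \<open>k\<close>-th largest sample is \<open>\<psi>\<close> of the \<open>k\<close>-th largest of \<open>n\<close>
  standard exponentials. By Renyi's representation the latter is a sum of independent exponentials
  with rates \<open>k, \<dots>, n\<close>. A monotone \<open>a\<close>-Lipschitz function of an \<open>Exp(r)\<close> variable deviates downwards
  from its mean by at most \<open>a/r\<close> and has variance at most \<open>(a/r)\<^sup>2\<close>, so its centred moment generating
  function at \<open>\<lambda> \<ge> 0\<close> is at most \<open>exp ((\<lambda> a / r)\<^sup>2)\<close>. Conditioning on one summand at a time bounds the
  log moment generating function by \<open>(\<lambda>/L)\<^sup>2 (1/k\<^sup>2 + \<dots> + 1/n\<^sup>2) \<le> \<lambda>\<^sup>2 v\<^sup>l / 2\<close>, and Chernoff's bound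
  gives the tail estimate.\<close>

section \<open>Order statistics of exponential samples\<close>

definition binomial_lower_tail :: "nat \<Rightarrow> nat \<Rightarrow> real \<Rightarrow> real" where
  "binomial_lower_tail n k p = (\<Sum>j<k. real (n choose j) * p ^ j * (1 - p) ^ (n - j))"

text \<open>The law of the \<open>k\<close>-th largest of \<open>n\<close> i.i.d. standard exponential variables: its value
  exceeds \<open>w\<close> iff fewer than \<open>k\<close> of the \<open>n\<close> values are \<open>\<le> w\<close>, so its c.d.f. at \<open>w \<ge> 0\<close> is
  \<open>binomial_lower_tail n k (exp (- w))\<close>.\<close>

definition exp_order_stat_density :: "nat \<Rightarrow> nat \<Rightarrow> real \<Rightarrow> real" where
  "exp_order_stat_density k n w =
     (if w < 0 then 0 else real k * real (n choose k) * exp (- w) ^ k * (1 - exp (- w)) ^ (n - k))"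

definition exp_order_stat :: "nat \<Rightarrow> nat \<Rightarrow> real measure" where
  "exp_order_stat k n = density lborel (\<lambda>w. ennreal (exp_order_stat_density k n w))"

lemma exp_order_stat_density_nonneg: "0 \<le> exp_order_stat_density k n w"
  by (auto simp: exp_order_stat_density_def)

lemma borel_measurable_exp_order_stat_density [measurable]:
  "exp_order_stat_density k n \<in> borel_measurable borel"
  unfolding exp_order_stat_density_def by measurable

lemma sets_exp_order_stat [measurable_cong, simp]: "sets (exp_order_stat k n) = sets borel"
  by (simp add: exp_order_stat_def)

lemma space_exp_order_stat [simp]: "space (exp_order_stat k n) = UNIV"
  by (simp add: exp_order_stat_def)

lemma binomial_lower_tail_1: "k \<le> n \<Longrightarrow> binomial_lower_tail n k 1 = 0"
  by (auto simp: binomial_lower_tail_def intro!: sum.neutral)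

lemma binomial_lower_tail_0:
  assumes "1 \<le> k"
  shows "binomial_lower_tail n k 0 = 1"
proof -
  have "binomial_lower_tail n k 0 = (\<Sum>j\<in>{0}. real (n choose j) * 0 ^ j * (1 - 0) ^ (n - j))"
    unfolding binomial_lower_tail_def using assms by (intro sum.mono_neutral_right) auto
  then show ?thesis by simp
qed

lemma binomial_lower_tail_nonneg: "0 \<le> p \<Longrightarrow> p \<le> 1 \<Longrightarrow> 0 \<le> binomial_lower_tail n k p"
  unfolding binomial_lower_tail_def by (intro sum_nonneg) auto

lemma binomial_times_diff: "(n choose k) * (n - k) = Suc k * (n choose Suc k)"
  by (metis binomial_absorb_comp binomial_absorption mult.commute)

lemma power_mult_one_minus_inverse:
  fixes e :: real
  shows "0 < e \<Longrightarrow> e ^ m * (1 - inverse e) ^ m = (e - 1) ^ m"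
  by (simp add: power_mult_distrib[symmetric] field_simps)

lemma has_real_derivative_exp_minus_power:
  "((\<lambda>w. exp (- w) ^ j) has_real_derivative (- real j * exp (- w) ^ j)) (at w)"
proof -
  have "\<And>w. exp (- w) ^ j = exp (- (real j * w))"
    by (metis exp_of_nat_mult mult_minus_right)
  then show ?thesis
    by (simp only:) (auto intro!: derivative_eq_intros)
qed

lemma has_real_derivative_one_minus_exp_minus_power:
  "((\<lambda>w. (1 - exp (- w)) ^ Suc m) has_real_derivative
     (real (Suc m) * (1 - exp (- w)) ^ m * exp (- w))) (at w)"
proof -
  have "((\<lambda>w. 1 - exp (- w)) has_real_derivative exp (- w)) (at w)"
    by (auto intro!: derivative_eq_intros)
  from DERIV_power[OF this, of "Suc m"] show ?thesis
    by (simp add: mult_ac)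
qed

lemma has_real_derivative_binomial_lower_tail_exp:
  assumes "k \<le> n"
  shows "((\<lambda>w. binomial_lower_tail n k (exp (- w))) has_real_derivative
           (real k * real (n choose k) * exp (- w) ^ k * (1 - exp (- w)) ^ (n - k))) (at w)"
  using assms
proof (induction k)
  case 0
  then show ?case by (simp add: binomial_lower_tail_def)
next
  case (Suc k)
  then have kn: "k < n" by simp
  define m where "m = n - Suc k"
  have nk: "n - k = Suc m" using kn m_def by simp
  have IH: "((\<lambda>w. binomial_lower_tail n k (exp (- w))) has_real_derivative
           (real k * real (n choose k) * exp (- w) ^ k * (1 - exp (- w)) ^ Suc m)) (at w)"
    using Suc kn nk by simp
  have step: "(\<lambda>w. binomial_lower_tail n (Suc k) (exp (- w))) =
      (\<lambda>w. binomial_lower_tail n k (exp (- w)) +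
             real (n choose k) * (exp (-w) ^ k * (1 - exp (-w)) ^ Suc m))"
    by (auto simp: binomial_lower_tail_def nk mult.assoc)
  have "((\<lambda>w. binomial_lower_tail n (Suc k) (exp (- w))) has_real_derivative
     real k * real (n choose k) * exp (- w) ^ k * (1 - exp (- w)) ^ Suc m +
     real (n choose k) * ((- real k * exp (- w) ^ k) * (1 - exp (-w)) ^ Suc m +
       (real (Suc m) * (1 - exp (- w)) ^ m * exp (- w)) * exp (-w) ^ k)) (at w)"
    unfolding step
    by (intro DERIV_add IH DERIV_cmult DERIV_mult has_real_derivative_exp_minus_power
        has_real_derivative_one_minus_exp_minus_power)
  moreover have "real k * real (n choose k) * exp (- w) ^ k * (1 - exp (- w)) ^ Suc m +
     real (n choose k) * ((- real k * exp (- w) ^ k) * (1 - exp (-w)) ^ Suc m +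
       (real (Suc m) * (1 - exp (- w)) ^ m * exp (- w)) * exp (-w) ^ k)
     = real ((n choose k) * (n - k)) * exp (- w) ^ Suc k * (1 - exp (- w)) ^ m"
    using nk by (simp add: algebra_simps)
  ultimately show ?case
    unfolding binomial_times_diff m_def by (simp add: algebra_simps)
qed

lemma has_integral_exp_order_stat_density:
  assumes "k \<le> n" "0 \<le> w"
  shows "((\<lambda>x. real k * real (n choose k) * exp (- x) ^ k * (1 - exp (- x)) ^ (n - k))
           has_integral binomial_lower_tail n k (exp (- w))) {0..w}"
proof -
  have "((\<lambda>x. real k * real (n choose k) * exp (- x) ^ k * (1 - exp (- x)) ^ (n - k)) has_integral
           binomial_lower_tail n k (exp (- w)) - binomial_lower_tail n k (exp (- 0))) {0..w}"
    using assms(2) has_real_derivative_binomial_lower_tail_exp[OF assms(1)]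
    by (intro fundamental_theorem_of_calculus)
       (auto simp: has_real_derivative_iff_has_vector_derivative[symmetric]
             intro: has_field_derivative_at_within)
  then show ?thesis
    using binomial_lower_tail_1[OF assms(1)] by simp
qed

lemma emeasure_exp_order_stat_atMost:
  assumes "k \<le> n" "0 \<le> w"
  shows "emeasure (exp_order_stat k n) {..w} = ennreal (binomial_lower_tail n k (exp (- w)))"
proof -
  have "emeasure (exp_order_stat k n) {..w} =
      (\<integral>\<^sup>+x. ennreal (exp_order_stat_density k n x) * indicator {..w} x \<partial>lborel)"
    unfolding exp_order_stat_def by (simp add: emeasure_density)
  also have "\<dots> = (\<integral>\<^sup>+x. ennreal (indicator {0..w} x *
      (real k * real (n choose k) * exp (- x) ^ k * (1 - exp (- x)) ^ (n - k))) \<partial>lborel)"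
    by (intro nn_integral_cong) (auto simp: exp_order_stat_density_def indicator_def)
  also have "\<dots> = ennreal (binomial_lower_tail n k (exp (- w)))"
    by (intro nn_integral_has_integral_lebesgue has_integral_exp_order_stat_density assms) auto
  finally show ?thesis .
qed

lemma prob_space_exp_order_stat:
  assumes "1 \<le> k" "k \<le> n"
  shows "prob_space (exp_order_stat k n)"
proof
  have "(\<lambda>i. emeasure (exp_order_stat k n) {..real i}) \<longlonglongrightarrow>
      emeasure (exp_order_stat k n) (\<Union>i. {..real i})"
    by (intro Lim_emeasure_incseq) (auto simp: incseq_def)
  moreover have "(\<Union>i. {..real i}) = UNIV"
    by (auto simp: real_arch_simple)
  moreover have "(\<lambda>i. emeasure (exp_order_stat k n) {..real i}) =
      (\<lambda>i. ennreal (binomial_lower_tail n k (exp (- real i))))"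
    using assms by (auto simp: emeasure_exp_order_stat_atMost)
  moreover have "(\<lambda>i. ennreal (binomial_lower_tail n k (exp (- real i)))) \<longlonglongrightarrow>
      ennreal (binomial_lower_tail n k 0)"
  proof -
    have "(\<lambda>i. exp (- real i)) \<longlonglongrightarrow> 0"
      by real_asymp
    then show ?thesis
      unfolding binomial_lower_tail_def by (intro tendsto_ennrealI tendsto_intros)
  qed
  ultimately have "emeasure (exp_order_stat k n) UNIV = ennreal (binomial_lower_tail n k 0)"
    using LIMSEQ_unique by metis
  then show "emeasure (exp_order_stat k n) (space (exp_order_stat k n)) = 1"
    using binomial_lower_tail_0[OF assms(1)] by simp
qed

abbreviation exponential_measure :: "nat \<Rightarrow> real measure" where
  "exponential_measure r \<equiv> density lborel (\<lambda>x. ennreal (exponential_density (real r) x))"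

lemma prob_space_exponential_measure: "0 < r \<Longrightarrow> prob_space (exponential_measure r)"
  by (rule prob_space_exponential_density) simp

lemma has_integral_exp_order_stat_density_convolution:
  assumes "k \<le> n" "0 \<le> x"
  shows "((\<lambda>y. real (Suc n) * exp (- (x - y) * real (Suc n)) *
              (real k * real (n choose k) * exp (- y) ^ k * (1 - exp (- y)) ^ (n - k)))
     has_integral (real k * real (Suc n choose k) * exp (- x) ^ k * (1 - exp (- x)) ^ (Suc n - k))) {0..x}"
proof -
  define m where "m = n - k"
  define c where "c = real (Suc n) * real k * real (n choose k) * exp (- x * real (Suc n))"
  define A where "A y = c / real (Suc m) * (exp y - 1) ^ Suc m" for y
  have nsplit: "Suc n = k + Suc m"
    using assms(1) m_def by simp
  have dA: "(A has_real_derivative c * ((exp y - 1) ^ m * exp y)) (at y)" for y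
  proof -
    have "((\<lambda>y. exp y - 1) has_real_derivative exp y) (at y)"
      by (auto intro!: derivative_eq_intros)
    from DERIV_cmult[OF DERIV_power[OF this, of "Suc m"], of "c / real (Suc m)"] show ?thesis
      unfolding A_def by (rule DERIV_cong) (simp add: mult_ac)
  qed
  have integrand: "real (Suc n) * exp (- (x - y) * real (Suc n)) *
      (real k * real (n choose k) * exp (- y) ^ k * (1 - exp (- y)) ^ (n - k))
      = c * ((exp y - 1) ^ m * exp y)" for y
  proof -
    have "exp (- (x - y) * real (Suc n)) = exp (- x * real (Suc n)) * exp y ^ (k + Suc m)"
      using nsplit by (simp add: exp_add[symmetric] exp_of_nat2_mult[symmetric] algebra_simps)
    moreover have "exp y ^ (k + Suc m) * exp (- y) ^ k * (1 - exp (- y)) ^ m = exp y * (exp y - 1) ^ m"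
      using power_mult_one_minus_inverse[of "exp y" m]
      by (simp add: power_add exp_minus field_simps)
    ultimately show ?thesis
      unfolding m_def[symmetric] c_def by (simp add: mult_ac)
  qed
  have "A x - A 0 = real k * real (Suc n choose k) * exp (- x) ^ k * (1 - exp (- x)) ^ (Suc n - k)"
  proof -
    have binom: "real (Suc m) * real (Suc n choose k) = real (Suc n) * real (n choose k)"
      using binomial_absorb_comp[of "Suc n" k] nsplit
      by (metis diff_Suc_1 add_diff_cancel_left' of_nat_mult)
    have "exp (- x * real (Suc n)) = inverse (exp x) ^ k * inverse (exp x) ^ Suc m"
      by (metis exp_minus exp_of_nat2_mult nsplit power_add)
    moreover have "inverse (exp x) ^ Suc m * (exp x - 1) ^ Suc m = (1 - inverse (exp x)) ^ Suc m"
      by (simp add: power_mult_distrib[symmetric] field_simps)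
    ultimately have e: "exp (- x * real (Suc n)) * (exp x - 1) ^ Suc m =
        exp (- x) ^ k * (1 - exp (- x)) ^ Suc m"
      by (simp add: exp_minus mult.assoc)
    have "A x - A 0 = real (Suc n) * real k * real (n choose k) *
        (exp (- x * real (Suc n)) * (exp x - 1) ^ Suc m) / real (Suc m)"
      unfolding A_def c_def by simp
    also have "\<dots> = real k * (real (Suc m) * real (Suc n choose k)) *
        (exp (- x * real (Suc n)) * (exp x - 1) ^ Suc m) / real (Suc m)"
      using binom by simp
    also have "\<dots> = real k * real (Suc n choose k) * (exp (- x) ^ k * (1 - exp (- x)) ^ Suc m)"
      unfolding e by (simp add: field_simps)
    finally show ?thesis
      using nsplit by simp
  qed
  moreover have "((\<lambda>y. c * ((exp y - 1) ^ m * exp y)) has_integral (A x - A 0)) {0..x}"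
    using assms(2) dA
    by (intro fundamental_theorem_of_calculus)
       (auto simp: has_real_derivative_iff_has_vector_derivative[symmetric]
             intro: has_field_derivative_at_within)
  ultimately show ?thesis
    using integrand by simp
qed

text \<open>Renyi's representation: adding an independent \<open>Exp(n + 1)\<close> variable to the \<open>k\<close>-th largest
  of \<open>n\<close> standard exponentials gives the \<open>k\<close>-th largest of \<open>n + 1\<close> of them.\<close>

lemma exp_order_stat_Suc:
  assumes "1 \<le> k" "k \<le> n"
  shows "exp_order_stat k (Suc n) = (exp_order_stat k n \<star> exponential_measure (Suc n))"
proof -
  interpret N: prob_space "exp_order_stat k n"
    by (rule prob_space_exp_order_stat[OF assms])
  interpret E: prob_space "exponential_measure (Suc n)"
    by (rule prob_space_exponential_measure) simp
  have "(exp_order_stat k n \<star> exponential_measure (Suc n)) =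
      (exponential_measure (Suc n) \<star> exp_order_stat k n)"
    by (rule convolution_commutative[OF N.finite_measure_axioms E.finite_measure_axioms]) simp_all
  also have "\<dots> = density lborel (\<lambda>x. \<integral>\<^sup>+y. ennreal (exponential_density (real (Suc n)) (x - y)) *
      ennreal (exp_order_stat_density k n y) \<partial>lborel)"
    unfolding exp_order_stat_def
    by (rule convolution_density)
       (use E.finite_measure_axioms N.finite_measure_axioms[unfolded exp_order_stat_def] in auto)
  also have "\<dots> = exp_order_stat k (Suc n)"
    unfolding exp_order_stat_def
  proof (intro density_cong AE_I2)
    fix x :: real
    show "(\<integral>\<^sup>+y. ennreal (exponential_density (real (Suc n)) (x - y)) *
        ennreal (exp_order_stat_density k n y) \<partial>lborel) = ennreal (exp_order_stat_density k (Suc n) x)"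
    proof (cases "x < 0")
      case True
      then have "(\<lambda>y. ennreal (exponential_density (real (Suc n)) (x - y)) *
          ennreal (exp_order_stat_density k n y)) = (\<lambda>y. 0)"
        by (auto simp: fun_eq_iff exponential_density_def exp_order_stat_density_def)
      then show ?thesis
        using True by (simp add: exp_order_stat_density_def)
    next
      case False
      have "(\<integral>\<^sup>+y. ennreal (exponential_density (real (Suc n)) (x - y)) *
          ennreal (exp_order_stat_density k n y) \<partial>lborel) =
        (\<integral>\<^sup>+y. ennreal (indicator {0..x} y * (real (Suc n) * exp (- (x - y) * real (Suc n)) *
          (real k * real (n choose k) * exp (- y) ^ k * (1 - exp (- y)) ^ (n - k)))) \<partial>lborel)"
        by (intro nn_integral_cong)
           (auto simp: exponential_density_def exp_order_stat_density_def ennreal_mult'[symmetric]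
                 split: split_indicator)
      also have "\<dots> = ennreal (real k * real (Suc n choose k) * exp (- x) ^ k *
          (1 - exp (- x)) ^ (Suc n - k))"
        using False assms
        by (intro nn_integral_has_integral_lebesgue has_integral_exp_order_stat_density_convolution) auto
      finally show ?thesis
        using False by (simp add: exp_order_stat_density_def)
    qed
  qed measurable
  finally show ?thesis ..
qed

lemma exp_order_stat_self: "1 \<le> k \<Longrightarrow> exp_order_stat k k = exponential_measure k"
  unfolding exp_order_stat_def
  by (intro density_cong AE_I2 refl)
     (auto simp: exp_order_stat_density_def exponential_density_def exp_of_nat2_mult[symmetric]
           mult.commute)

section \<open>Concentration for Lipschitz functions of an exponential variable\<close>

lemma exponential_measure_moments:
  assumes "0 < r"
  shows "integrable (exponential_measure r) (\<lambda>x. x)"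
    and "(\<integral>x. x \<partial>exponential_measure r) = 1 / real r"
    and "integrable (exponential_measure r) (\<lambda>x. x\<^sup>2)"
    and "(\<integral>x. (x - 1 / real r)\<^sup>2 \<partial>exponential_measure r) = 1 / (real r)\<^sup>2"
    and "AE x in exponential_measure r. 0 \<le> x"
proof -
  interpret prob_space "exponential_measure r"
    by (rule prob_space_exponential_measure[OF assms])
  have r: "0 < real r"
    using assms by simp
  have D: "distributed (exponential_measure r) lborel (\<lambda>x. x) (exponential_density (real r))"
    unfolding distributed_def by (auto simp: distr_id2)
  show "integrable (exponential_measure r) (\<lambda>x. x)"
    using erlang_ith_moment_integrable[OF r D, of 1] by simp
  show mean: "(\<integral>x. x \<partial>exponential_measure r) = 1 / real r"
    using exponential_distributed_expectation[OF r D] by simp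
  show "integrable (exponential_measure r) (\<lambda>x. x\<^sup>2)"
    using erlang_ith_moment_integrable[OF r D, of 2] by simp
  show "(\<integral>x. (x - 1 / real r)\<^sup>2 \<partial>exponential_measure r) = 1 / (real r)\<^sup>2"
    using exponential_distributed_variance[OF r D] mean by simp
  show "AE x in exponential_measure r. 0 \<le> x"
    by (subst distributed_AE2[OF D]) (auto simp: exponential_density_def)
qed

lemma one_add_add_square_pos:
  fixes y :: real
  shows "0 < 1 + y + y\<^sup>2"
proof -
  have "1 + y + y\<^sup>2 = (y + 1/2)\<^sup>2 + 3/4"
    by (simp add: power2_eq_square field_simps)
  moreover have "0 \<le> (y + 1/2)\<^sup>2"
    by simp
  ultimately show ?thesis
    by linarith
qed

lemma exp_le_quadratic:
  fixes y :: real
  assumes "y \<le> 1"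
  shows "exp y \<le> 1 + y + y\<^sup>2"
proof (cases "0 \<le> y")
  case True
  then show ?thesis
    using exp_bound assms by blast
next
  case False
  have "1 \<le> (1 + y + y\<^sup>2) * (1 + (-y) + (-y)\<^sup>2 / 2)"
  proof -
    have "(1 + y + y\<^sup>2) * (1 + (-y) + (-y)\<^sup>2 / 2) = 1 + y\<^sup>2/2 - y^3/2 + y^4/2"
      by (simp add: field_simps power2_eq_square power3_eq_cube power4_eq_xxxx)
    moreover have "0 \<le> -(y ^ 3)"
      using False mult_nonneg_nonpos[of "y*y" y] by (simp add: power3_eq_cube)
    moreover have "0 \<le> y ^ 4" "0 \<le> y\<^sup>2"
      by simp_all
    ultimately show ?thesis
      by linarith
  qed
  also have "\<dots> \<le> (1 + y + y\<^sup>2) * exp (-y)"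
    using False one_add_add_square_pos[of y]
    by (intro mult_left_mono exp_lower_Taylor_quadratic) auto
  finally show ?thesis
    by (simp add: exp_minus field_simps)
qed

text \<open>No lower bound on \<open>Z\<close> is needed: \<open>exp y \<le> 1 + y + y\<^sup>2\<close> holds for every \<open>y \<le> 1\<close>.\<close>

lemma (in prob_space) nn_integral_exp_centred_le:
  assumes Z: "integrable M Z" "integrable M (\<lambda>x. (Z x)\<^sup>2)" "expectation Z = 0"
    and le: "AE x in M. Z x \<le> b"
    and var: "expectation (\<lambda>x. (Z x)\<^sup>2) \<le> b\<^sup>2"
    and l: "0 \<le> l"
  shows "(\<integral>\<^sup>+x. ennreal (exp (l * Z x)) \<partial>M) \<le> ennreal (exp ((l * b)\<^sup>2))"
proof (cases "1 \<le> l * b")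
  case True
  have "(\<integral>\<^sup>+x. ennreal (exp (l * Z x)) \<partial>M) \<le> (\<integral>\<^sup>+x. ennreal (exp ((l * b)\<^sup>2)) \<partial>M)"
  proof (rule nn_integral_mono_AE)
    show "AE x in M. ennreal (exp (l * Z x)) \<le> ennreal (exp ((l * b)\<^sup>2))"
      using le
    proof eventually_elim
      fix x assume "Z x \<le> b"
      then have "l * Z x \<le> l * b"
        using l by (intro mult_left_mono)
      also have "\<dots> \<le> (l * b)\<^sup>2"
        using True mult_left_mono[of 1 "l * b" "l * b"] by (simp add: power2_eq_square)
      finally show "ennreal (exp (l * Z x)) \<le> ennreal (exp ((l * b)\<^sup>2))"
        by simp
    qed
  qed
  then show ?thesis
    by (simp add: emeasure_space_1)
next
  case False
  have int: "integrable M (\<lambda>x. 1 + l * Z x + (l * Z x)\<^sup>2)"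
    using Z by (simp add: power_mult_distrib)
  have "(\<integral>\<^sup>+x. ennreal (exp (l * Z x)) \<partial>M) \<le> (\<integral>\<^sup>+x. ennreal (1 + l * Z x + (l * Z x)\<^sup>2) \<partial>M)"
  proof (rule nn_integral_mono_AE)
    show "AE x in M. ennreal (exp (l * Z x)) \<le> ennreal (1 + l * Z x + (l * Z x)\<^sup>2)"
      using le
    proof eventually_elim
      fix x assume "Z x \<le> b"
      then have "l * Z x \<le> 1"
        using l False mult_left_mono[of "Z x" b l] by linarith
      then show "ennreal (exp (l * Z x)) \<le> ennreal (1 + l * Z x + (l * Z x)\<^sup>2)"
        by (intro ennreal_leI exp_le_quadratic)
    qed
  qed
  also have "\<dots> = ennreal (expectation (\<lambda>x. 1 + l * Z x + (l * Z x)\<^sup>2))"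
    using int by (intro nn_integral_eq_integral AE_I2) (auto intro: less_imp_le one_add_add_square_pos)
  also have "expectation (\<lambda>x. 1 + l * Z x + (l * Z x)\<^sup>2) = 1 + l\<^sup>2 * expectation (\<lambda>x. (Z x)\<^sup>2)"
    using Z by (simp add: power_mult_distrib prob_space)
  also have "\<dots> \<le> 1 + (l * b)\<^sup>2"
    using var by (simp add: power_mult_distrib mult_left_mono)
  also have "\<dots> \<le> exp ((l * b)\<^sup>2)"
    by (rule exp_ge_add_one_self)
  finally show ?thesis
    by (simp add: ennreal_leI)
qed

lemma (in prob_space) expectation_square_centred_le:
  fixes X :: "'a \<Rightarrow> real"
  assumes "integrable M X" "integrable M (\<lambda>x. (X x)\<^sup>2)"
  shows "expectation (\<lambda>x. (X x - expectation X)\<^sup>2) \<le> expectation (\<lambda>x. (X x - c)\<^sup>2)"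
proof -
  define m where "m = expectation X"
  have "expectation (\<lambda>x. (X x - c)\<^sup>2) =
      expectation (\<lambda>x. (X x - m)\<^sup>2 + 2 * (m - c) * (X x - m) + (m - c)\<^sup>2)"
    by (intro Bochner_Integration.integral_cong refl) (simp add: power2_eq_square algebra_simps)
  also have "\<dots> = expectation (\<lambda>x. (X x - m)\<^sup>2) + (m - c)\<^sup>2"
    using assms by (simp add: power2_diff prob_space m_def)
  finally show ?thesis
    unfolding m_def by simp
qed

lemma lipschitz_on_UNIV_abs_le:
  fixes f :: "real \<Rightarrow> real"
  shows "C-lipschitz_on UNIV f \<Longrightarrow> \<bar>f x - f y\<bar> \<le> C * \<bar>x - y\<bar>"
  using lipschitz_onD[of C UNIV f x y] by (simp add: dist_real_def)

lemma lipschitz_on_UNIV_shift: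
  fixes f :: "real \<Rightarrow> real"
  assumes "C-lipschitz_on UNIV f"
  shows "C-lipschitz_on UNIV (\<lambda>y. f (x + y))"
proof (rule lipschitz_onI)
  fix y z :: real
  show "dist (f (x + y)) (f (x + z)) \<le> C * dist y z"
    using lipschitz_on_UNIV_abs_le[OF assms, of "x + y" "x + z"] by (simp add: dist_real_def)
qed (rule lipschitz_on_nonneg[OF assms])

lemma integrable_lipschitz:
  fixes g :: "real \<Rightarrow> real"
  assumes "finite_measure M" "integrable M (\<lambda>x. x)" "C-lipschitz_on UNIV g" "g \<in> borel_measurable M"
  shows "integrable M g"
proof -
  interpret finite_measure M by fact
  have majorant: "integrable M (\<lambda>x. \<bar>g 0\<bar> + C * \<bar>x\<bar>)"
    using assms(2) by (intro Bochner_Integration.integrable_add integrable_mult_right integrable_abs) auto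
  have "\<bar>g x\<bar> \<le> \<bar>g 0\<bar> + C * \<bar>x\<bar>" for x
    using lipschitz_on_UNIV_abs_le[OF assms(3), of x 0] by simp
  then show ?thesis
    using lipschitz_on_nonneg[OF assms(3)]
    by (intro Bochner_Integration.integrable_bound[OF majorant assms(4)] AE_I2) auto
qed

lemma integrable_lipschitz_square:
  fixes g :: "real \<Rightarrow> real"
  assumes "finite_measure M" "integrable M (\<lambda>x. x\<^sup>2)" "C-lipschitz_on UNIV g" "g \<in> borel_measurable M"
  shows "integrable M (\<lambda>x. (g x)\<^sup>2)"
proof -
  interpret finite_measure M by fact
  have majorant: "integrable M (\<lambda>x. 2 * (g 0)\<^sup>2 + 2 * C\<^sup>2 * x\<^sup>2)"
    using assms(2) by (intro Bochner_Integration.integrable_add integrable_mult_right) auto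
  have "(g x)\<^sup>2 \<le> 2 * (g 0)\<^sup>2 + 2 * C\<^sup>2 * x\<^sup>2" for x
  proof -
    have "\<bar>g x\<bar> \<le> \<bar>g 0\<bar> + C * \<bar>x\<bar>"
      using lipschitz_on_UNIV_abs_le[OF assms(3), of x 0] by simp
    then have "\<bar>g x\<bar>\<^sup>2 \<le> (\<bar>g 0\<bar> + C * \<bar>x\<bar>)\<^sup>2"
      by (intro power_mono) auto
    also have "\<dots> \<le> 2 * (g 0)\<^sup>2 + 2 * C\<^sup>2 * x\<^sup>2"
      using sum_squares_bound[of "\<bar>g 0\<bar>" "C * \<bar>x\<bar>"]
      by (simp add: power2_eq_square algebra_simps)
    finally show ?thesis
      by simp
  qed
  then show ?thesis
    using assms(4) by (intro Bochner_Integration.integrable_bound[OF majorant] AE_I2) auto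
qed

lemma variance_lipschitz_le:
  fixes M :: "real measure" and h :: "real \<Rightarrow> real"
  assumes "prob_space M" and sets: "sets M = sets borel"
    and int: "integrable M (\<lambda>x. x)" "integrable M (\<lambda>x. x\<^sup>2)"
    and lip: "a-lipschitz_on UNIV h" and [measurable]: "h \<in> borel_measurable borel"
  shows "(\<integral>x. ((\<integral>t. h t \<partial>M) - h x)\<^sup>2 \<partial>M) \<le> a\<^sup>2 * (\<integral>x. (x - (\<integral>t. t \<partial>M))\<^sup>2 \<partial>M)"
proof -
  interpret prob_space M by fact
  define c where "c = expectation (\<lambda>x. x)"
  have [measurable_cong]: "sets M = sets borel"
    by (rule sets)
  have hi: "integrable M h"
    by (rule integrable_lipschitz[OF finite_measure_axioms int(1) lip]) measurable
  have hsq: "integrable M (\<lambda>x. (h x)\<^sup>2)"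
    by (rule integrable_lipschitz_square[OF finite_measure_axioms int(2) lip]) measurable
  have "expectation (\<lambda>x. (expectation h - h x)\<^sup>2) \<le> expectation (\<lambda>x. (h x - h c)\<^sup>2)"
    using expectation_square_centred_le[OF hi hsq, of "h c"] by (simp add: power2_commute)
  also have "\<dots> \<le> expectation (\<lambda>x. a\<^sup>2 * (x - c)\<^sup>2)"
  proof (rule integral_mono)
    show "integrable M (\<lambda>x. (h x - h c)\<^sup>2)"
      using hi hsq by (simp add: power2_diff)
    show "integrable M (\<lambda>x. a\<^sup>2 * (x - c)\<^sup>2)"
      using int by (simp add: power2_diff)
    fix x
    have "\<bar>h x - h c\<bar>\<^sup>2 \<le> (a * \<bar>x - c\<bar>)\<^sup>2"
      using lipschitz_on_UNIV_abs_le[OF lip] by (intro power_mono) auto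
    then show "(h x - h c)\<^sup>2 \<le> a\<^sup>2 * (x - c)\<^sup>2"
      by (simp add: power_mult_distrib)
  qed
  also have "\<dots> = a\<^sup>2 * expectation (\<lambda>x. (x - c)\<^sup>2)"
    by simp
  finally show ?thesis
    unfolding c_def .
qed

text \<open>For monotone \<open>h\<close> the downward deviation \<open>E h - h\<close> is at most \<open>E h - h 0 \<le> a E x = a / r\<close>.\<close>

lemma nn_integral_exponential_measure_exp_le:
  assumes r: "0 < r" and l: "0 \<le> l" and mono: "mono h" and lip: "a-lipschitz_on UNIV h"
  shows "(\<integral>\<^sup>+x. ennreal (exp (l * ((\<integral>t. h t \<partial>exponential_measure r) - h x))) \<partial>exponential_measure r)
    \<le> ennreal (exp ((l * a / real r)\<^sup>2))"
proof -
  interpret prob_space "exponential_measure r"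
    by (rule prob_space_exponential_measure[OF r])
  note moments = exponential_measure_moments[OF r]
  have prob_UNIV: "prob UNIV = 1"
    using prob_space by simp
  have [measurable]: "h \<in> borel_measurable borel"
    using mono by (rule borel_measurable_mono)
  have hi: "integrable (exponential_measure r) h"
    by (rule integrable_lipschitz[OF finite_measure_axioms moments(1) lip]) simp
  have hsq: "integrable (exponential_measure r) (\<lambda>x. (h x)\<^sup>2)"
    by (rule integrable_lipschitz_square[OF finite_measure_axioms moments(3) lip]) simp
  define m where "m = expectation h"
  define b where "b = a / real r"
  have "m - h 0 = expectation (\<lambda>x. h x - h 0)"
    using hi by (simp add: m_def prob_UNIV)
  also have "\<dots> \<le> expectation (\<lambda>x. a * x)"
  proof (rule integral_mono_AE)
    show "AE x in exponential_measure r. h x - h 0 \<le> a * x"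
      using moments(5)
    proof eventually_elim
      fix x :: real assume "0 \<le> x"
      then show "h x - h 0 \<le> a * x"
        using lipschitz_on_UNIV_abs_le[OF lip, of x 0] by simp
    qed
  qed (use hi moments(1) in simp_all)
  also have "\<dots> = b"
    using moments(2) by (simp add: b_def)
  finally have "m - h 0 \<le> b" .
  moreover have "h 0 \<le> h x" if "0 \<le> x" for x
    using that by (rule monoD[OF mono])
  ultimately have "AE x in exponential_measure r. m - h x \<le> b"
    using moments(5) by (auto elim!: eventually_mono) (smt (verit))
  moreover have "expectation (\<lambda>x. (m - h x)\<^sup>2) \<le> b\<^sup>2"
    using variance_lipschitz_le[OF prob_space_axioms _ moments(1,3) lip] moments(2,4)
    by (simp add: m_def b_def power_divide)
  moreover have "integrable (exponential_measure r) (\<lambda>x. m - h x)"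
    using hi by simp
  moreover have "integrable (exponential_measure r) (\<lambda>x. (m - h x)\<^sup>2)"
    using hi hsq by (simp add: power2_diff)
  moreover have "expectation (\<lambda>x. m - h x) = 0"
    using hi by (simp add: m_def prob_UNIV)
  ultimately have "(\<integral>\<^sup>+x. ennreal (exp (l * (m - h x))) \<partial>exponential_measure r) \<le> ennreal (exp ((l * b)\<^sup>2))"
    using l by (intro nn_integral_exp_centred_le)
  then show ?thesis
    by (simp add: m_def b_def)
qed

lemma nn_integral_exponential_measure_exp_shift_le:
  assumes "0 < r" "0 \<le> l" "mono h" "a-lipschitz_on UNIV h"
  shows "(\<integral>\<^sup>+x. ennreal (exp (l * (c - h x))) \<partial>exponential_measure r)
    \<le> ennreal (exp (l * (c - (\<integral>t. h t \<partial>exponential_measure r)))) * ennreal (exp ((l * a / real r)\<^sup>2))"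
proof -
  define m where "m = (\<integral>t. h t \<partial>exponential_measure r)"
  have [measurable]: "h \<in> borel_measurable borel"
    using assms(3) by (rule borel_measurable_mono)
  have "(\<integral>\<^sup>+x. ennreal (exp (l * (c - h x))) \<partial>exponential_measure r)
      = (\<integral>\<^sup>+x. ennreal (exp (l * (c - m))) * ennreal (exp (l * (m - h x))) \<partial>exponential_measure r)"
    by (intro nn_integral_cong) (simp add: ennreal_mult'[symmetric] exp_add[symmetric] algebra_simps)
  also have "\<dots> = ennreal (exp (l * (c - m))) *
      (\<integral>\<^sup>+x. ennreal (exp (l * (m - h x))) \<partial>exponential_measure r)"
    by (rule nn_integral_cmult) measurable
  also have "\<dots> \<le> ennreal (exp (l * (c - m))) * ennreal (exp ((l * a / real r)\<^sup>2))"
    unfolding m_def using assms by (intro mult_left_mono nn_integral_exponential_measure_exp_le) auto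
  finally show ?thesis
    unfolding m_def .
qed

section \<open>Tensorization along the Renyi representation\<close>

lemma integrable_exp_order_stat:
  assumes "1 \<le> k" "k \<le> n"
  shows "integrable (exp_order_stat k n) (\<lambda>x. x)"
proof -
  define c where "c = real k * real (n choose k)"
  have "integrable lborel (\<lambda>x. erlang_density 0 1 x * x ^ 1)"
  proof (rule integrableI_nonneg)
    show "AE x in lborel. 0 \<le> erlang_density 0 1 x * x ^ 1"
      by (intro AE_I2) (simp add: erlang_density_def)
    show "(\<integral>\<^sup>+ x. ennreal (erlang_density 0 1 x * x ^ 1) \<partial>lborel) < \<infinity>"
      by (subst nn_integral_erlang_ith_moment) auto
  qed measurable
  then have majorant: "integrable lborel (\<lambda>x. c * (exponential_density 1 x * x))"
    by simp
  have "norm (exp_order_stat_density k n x *\<^sub>R x) \<le> norm (c * (exponential_density 1 x * x))" for x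
  proof (cases "x < 0")
    case True
    then show ?thesis
      by (simp add: exp_order_stat_density_def)
  next
    case False
    have "exp (- x) ^ k \<le> exp (- x)"
      using assms(1) False by (intro power_decreasing[of 1 k "exp (-x)", simplified]) auto
    moreover have "(1 - exp (- x)) ^ (n - k) \<le> 1" "0 \<le> (1 - exp (- x)) ^ (n - k)"
      using False by (auto intro: power_le_one)
    ultimately have "exp (- x) ^ k * (1 - exp (- x)) ^ (n - k) \<le> exp (- x)"
      by (meson exp_ge_zero mult_right_le_one_le order_trans zero_le_power)
    then have "exp_order_stat_density k n x * x \<le> c * exp (- x) * x"
      using False by (intro mult_right_mono)
        (auto simp: exp_order_stat_density_def c_def mult.assoc mult_left_mono)
    then show ?thesis
      using False exp_order_stat_density_nonneg[of k n x]
      by (simp add: exponential_density_def abs_mult c_def)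
  qed
  then have "integrable lborel (\<lambda>x. exp_order_stat_density k n x *\<^sub>R x)"
    by (intro Bochner_Integration.integrable_bound[OF majorant]) auto
  then show ?thesis
    unfolding exp_order_stat_def by (subst integrable_density) (auto simp: exp_order_stat_density_nonneg)
qed

lemma integral_convolution_lipschitz:
  fixes f :: "real \<Rightarrow> real"
  assumes "prob_space M" "sets M = sets borel" "integrable M (\<lambda>x. x)"
    and "prob_space N" "sets N = sets borel" "integrable N (\<lambda>x. x)"
    and f_meas [measurable]: "f \<in> borel_measurable borel" and lip: "C-lipschitz_on UNIV f"
  shows "(\<integral>w. f w \<partial>(M \<star> N)) = (\<integral>x. \<integral>y. f (x + y) \<partial>N \<partial>M)"
proof -
  interpret M: prob_space M by fact
  interpret N: prob_space N by fact
  interpret P: pair_sigma_finite M N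
    by (simp add: M.sigma_finite_measure_axioms N.sigma_finite_measure_axioms pair_sigma_finite.intro)
  have [measurable_cong]: "sets M = sets borel" "sets N = sets borel"
    by fact+
  have C: "0 \<le> C"
    using lip by (rule lipschitz_on_nonneg)
  have int_shift: "integrable N (\<lambda>y. f (x + y))" for x
    by (rule integrable_lipschitz[OF N.finite_measure_axioms assms(6) lipschitz_on_UNIV_shift[OF lip]]) simp
  have int_abs: "integrable N (\<lambda>y. \<bar>y\<bar>)"
    using assms(6) by (rule integrable_abs)
  have inner_bound: "(\<integral>y. norm (f (x + y)) \<partial>N) \<le> \<bar>f 0\<bar> + C * \<bar>x\<bar> + C * (\<integral>y. \<bar>y\<bar> \<partial>N)" for x
  proof -
    have "(\<integral>y. norm (f (x + y)) \<partial>N) \<le> (\<integral>y. \<bar>f 0\<bar> + C * \<bar>x\<bar> + C * \<bar>y\<bar> \<partial>N)"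
    proof (rule integral_mono)
      fix y
      have "\<bar>f (x + y) - f 0\<bar> \<le> C * \<bar>x + y\<bar>"
        using lipschitz_on_UNIV_abs_le[OF lip, of "x + y" 0] by simp
      moreover have "C * \<bar>x + y\<bar> \<le> C * \<bar>x\<bar> + C * \<bar>y\<bar>"
        using C abs_triangle_ineq[of x y] by (metis distrib_left mult_left_mono)
      ultimately show "norm (f (x + y)) \<le> \<bar>f 0\<bar> + C * \<bar>x\<bar> + C * \<bar>y\<bar>"
        by simp
    qed (use int_shift int_abs in auto)
    also have "\<dots> = \<bar>f 0\<bar> + C * \<bar>x\<bar> + C * (\<integral>y. \<bar>y\<bar> \<partial>N)"
      using int_abs by (simp add: N.prob_space)
    finally show ?thesis .
  qed
  have int_pair: "integrable (M \<Otimes>\<^sub>M N) (\<lambda>z. f (fst z + snd z))"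
  proof (rule P.Fubini_integrable)
    have majorant: "integrable M (\<lambda>x. \<bar>f 0\<bar> + C * \<bar>x\<bar> + C * (\<integral>y. \<bar>y\<bar> \<partial>N))"
      using assms(3) by (intro Bochner_Integration.integrable_add integrable_mult_right integrable_abs) auto
    have "0 \<le> (\<integral>y. \<bar>y\<bar> \<partial>N)"
      by simp
    then show "integrable M (\<lambda>x. \<integral>y. norm (f (fst (x, y) + snd (x, y))) \<partial>N)"
      using inner_bound C by (intro Bochner_Integration.integrable_bound[OF majorant] AE_I2) auto
  qed (use int_shift in auto)
  have "(\<integral>x. \<integral>y. f (x + y) \<partial>N \<partial>M) = (\<integral>z. f (fst z + snd z) \<partial>(M \<Otimes>\<^sub>M N))"
    using P.integral_fst'[OF int_pair] by simp
  also have "\<dots> = (\<integral>w. f w \<partial>(M \<star> N))"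
    unfolding convolution_def by (subst integral_distr) (auto simp: case_prod_beta')
  finally show ?thesis ..
qed

lemma
  fixes g :: "real \<Rightarrow> real"
  assumes N: "prob_space N" "sets N = sets borel" "integrable N (\<lambda>x. x)"
    and mono: "mono g" and lip: "C-lipschitz_on UNIV g"
  shows mono_integral_shift: "mono (\<lambda>b. \<integral>t. g (b + t) \<partial>N)"
    and lipschitz_on_integral_shift: "C-lipschitz_on UNIV (\<lambda>b. \<integral>t. g (b + t) \<partial>N)"
proof -
  interpret prob_space N by fact
  have [measurable_cong]: "sets N = sets borel"
    by (rule N(2))
  have [measurable]: "g \<in> borel_measurable borel"
    using mono by (rule borel_measurable_mono)
  have int: "integrable N (\<lambda>t. g (b + t))" for b
    by (rule integrable_lipschitz[OF finite_measure_axioms N(3) lipschitz_on_UNIV_shift[OF lip]])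
       measurable
  show "mono (\<lambda>b. \<integral>t. g (b + t) \<partial>N)"
    by (intro monoI integral_mono int) (auto intro: monoD[OF mono])
  show "C-lipschitz_on UNIV (\<lambda>b. \<integral>t. g (b + t) \<partial>N)"
  proof (rule lipschitz_onI)
    fix x y :: real
    have "dist (\<integral>t. g (x + t) \<partial>N) (\<integral>t. g (y + t) \<partial>N) = \<bar>\<integral>t. g (x + t) - g (y + t) \<partial>N\<bar>"
      using int by (simp add: dist_real_def)
    also have "\<dots> \<le> (\<integral>t. \<bar>g (x + t) - g (y + t)\<bar> \<partial>N)"
      by (rule integral_abs_bound)
    also have "\<dots> \<le> (\<integral>t. C * \<bar>x - y\<bar> \<partial>N)"
    proof (rule integral_mono)
      fix t
      show "\<bar>g (x + t) - g (y + t)\<bar> \<le> C * \<bar>x - y\<bar>"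
        using lipschitz_on_UNIV_abs_le[OF lip, of "x + t" "y + t"] by simp
    qed (use int in auto)
    also have "\<dots> = C * dist x y"
      using prob_space by (simp add: dist_real_def)
    finally show "dist (\<integral>t. g (x + t) \<partial>N) (\<integral>t. g (y + t) \<partial>N) \<le> C * dist x y" .
  qed (rule lipschitz_on_nonneg[OF lip])
qed

text \<open>Induction on \<open>n\<close>: with \<open>W\<^sub>n\<^sub>+\<^sub>1 = W\<^sub>n + E\<close>, \<open>E \<sim> Exp(n + 1)\<close> independent, condition on \<open>W\<^sub>n\<close>; the
  inner integral is the one-variable bound at rate \<open>n + 1\<close>, and the remaining function of
  \<open>W\<^sub>n\<close> is again monotone and \<open>a\<close>-Lipschitz.\<close>

lemma nn_integral_exp_order_stat_exp_le:
  assumes k: "1 \<le> k" "k \<le> n" and l: "0 \<le> l"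
    and mono_g: "mono g" and lip_g: "a-lipschitz_on UNIV g"
  shows "(\<integral>\<^sup>+w. ennreal (exp (l * ((\<integral>t. g t \<partial>exp_order_stat k n) - g w))) \<partial>exp_order_stat k n)
      \<le> ennreal (exp (l\<^sup>2 * a\<^sup>2 * (\<Sum>j=k..n. 1 / (real j)\<^sup>2)))"
  using k(2) mono_g lip_g
proof (induction n arbitrary: g rule: nat_induct_at_least)
  case base
  have "(\<integral>\<^sup>+w. ennreal (exp (l * ((\<integral>t. g t \<partial>exp_order_stat k k) - g w))) \<partial>exp_order_stat k k)
      \<le> ennreal (exp ((l * a / real k)\<^sup>2))"
    unfolding exp_order_stat_self[OF k(1)] using k(1) l base
    by (intro nn_integral_exponential_measure_exp_le) auto
  also have "(l * a / real k)\<^sup>2 = l\<^sup>2 * a\<^sup>2 * (\<Sum>j=k..k. 1 / (real j)\<^sup>2)"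
    by (simp add: power_mult_distrib power_divide)
  finally show ?case .
next
  case (Suc n)
  note g_mono = Suc.prems(1) and g_lip = Suc.prems(2)
  define E where "E = exponential_measure (Suc n)"
  define W where "W = exp_order_stat k n"
  interpret E: prob_space E
    unfolding E_def by (rule prob_space_exponential_measure) simp
  interpret W: prob_space W
    unfolding W_def by (rule prob_space_exp_order_stat[OF k(1) Suc.hyps])
  have [measurable_cong, simp]: "sets E = sets borel" "sets W = sets borel"
    by (simp_all add: E_def W_def)
  have int_E: "integrable E (\<lambda>x. x)"
    unfolding E_def by (rule exponential_measure_moments) simp
  have int_W: "integrable W (\<lambda>x. x)"
    unfolding W_def by (rule integrable_exp_order_stat[OF k(1) Suc.hyps])
  have [measurable]: "g \<in> borel_measurable borel"
    using g_mono by (rule borel_measurable_mono)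
  have conv: "exp_order_stat k (Suc n) = (W \<star> E)"
    unfolding E_def W_def by (rule exp_order_stat_Suc[OF k(1) Suc.hyps])
  define gE where "gE b = (\<integral>t. g (b + t) \<partial>E)" for b
  have gE_mono: "mono gE" and gE_lip: "a-lipschitz_on UNIV gE"
    unfolding gE_def[abs_def]
    using E.prob_space_axioms int_E g_mono g_lip
    by (auto intro: mono_integral_shift lipschitz_on_integral_shift)
  have [measurable]: "gE \<in> borel_measurable borel"
    using gE_mono by (rule borel_measurable_mono)
  define c where "c = (\<integral>b. gE b \<partial>W)"
  have c_eq: "(\<integral>t. g t \<partial>exp_order_stat k (Suc n)) = c"
    unfolding conv c_def gE_def
    by (rule integral_convolution_lipschitz[OF W.prob_space_axioms _ int_W E.prob_space_axioms _ int_E _ g_lip])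
       simp_all
  define K where "K = exp ((l * a / real (Suc n))\<^sup>2)"
  have inner: "(\<integral>\<^sup>+t. ennreal (exp (l * (c - g (b + t)))) \<partial>E) \<le> ennreal (exp (l * (c - gE b))) * ennreal K"
    for b
    unfolding gE_def K_def E_def using l g_mono lipschitz_on_UNIV_shift[OF g_lip]
    by (intro nn_integral_exponential_measure_exp_shift_le) (auto simp: mono_def)
  have "(\<integral>\<^sup>+w. ennreal (exp (l * (c - g w))) \<partial>exp_order_stat k (Suc n))
      = (\<integral>\<^sup>+b. \<integral>\<^sup>+t. ennreal (exp (l * (c - g (b + t)))) \<partial>E \<partial>W)"
    unfolding conv
    by (rule nn_integral_convolution) auto
  also have "\<dots> \<le> (\<integral>\<^sup>+b. ennreal (exp (l * (c - gE b))) * ennreal K \<partial>W)"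
    by (intro nn_integral_mono inner)
  also have "\<dots> = (\<integral>\<^sup>+b. ennreal (exp (l * (c - gE b))) \<partial>W) * ennreal K"
    by (rule nn_integral_multc) measurable
  also have "\<dots> \<le> ennreal (exp (l\<^sup>2 * a\<^sup>2 * (\<Sum>j=k..n. 1 / (real j)\<^sup>2))) * ennreal K"
    using Suc.IH[OF gE_mono gE_lip] unfolding c_def W_def by (intro mult_right_mono) auto
  also have "\<dots> = ennreal (exp (l\<^sup>2 * a\<^sup>2 * (\<Sum>j=k..Suc n. 1 / (real j)\<^sup>2)))"
    using Suc.hyps
    by (simp add: K_def ennreal_mult'[symmetric] exp_add[symmetric] power_divide algebra_simps)
  finally show ?case
    unfolding c_eq .
qed

section \<open>The quantile transform of a distribution with hazard rate at least \<open>L\<close>\<close>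

locale hazard_lower_bound =
  fixes f :: "real \<Rightarrow> real" and L :: real
  assumes f_meas [measurable]: "f \<in> borel_measurable borel"
    and f_supp: "\<And>x. x < 0 \<Longrightarrow> f x = 0"
    and f_prob: "prob_space (density lborel (\<lambda>t. ennreal (f t)))"
    and hazard_ge: "\<And>x. 0 \<le> x \<Longrightarrow> L \<le> hazard f x"
    and L_pos: "0 < L"
begin

abbreviation law :: "real measure" where
  "law \<equiv> density lborel (\<lambda>t. ennreal (f t))"

definition surv :: "real \<Rightarrow> real" where
  "surv z = 1 - cdf_of_density f z"

sublocale F: prob_space law
  by (rule f_prob)

lemma surv_eq_measure: "surv z = measure law {z<..}"
proof -
  have "measure law {z<..} = measure law (space law - {..z})"
    by (intro arg_cong[where f="measure law"]) auto
  also have "\<dots> = 1 - measure law {..z}"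
    by (subst F.prob_compl) auto
  finally show ?thesis
    by (simp add: surv_def cdf_of_density_def)
qed

lemma surv_nonneg: "0 \<le> surv z"
  by (simp add: surv_eq_measure)

lemma surv_le_1: "surv z \<le> 1"
  by (simp add: surv_eq_measure)

lemma surv_antimono: "x \<le> y \<Longrightarrow> surv y \<le> surv x"
  unfolding surv_eq_measure by (intro F.finite_measure_mono) auto

lemma surv_eq_1:
  assumes "z \<le> 0"
  shows "surv z = 1"
proof -
  have "emeasure law {..z} = (\<integral>\<^sup>+x. ennreal (f x) * indicator {..z} x \<partial>lborel)"
    by (simp add: emeasure_density)
  also have "\<dots> = 0"
  proof (subst nn_integral_0_iff_AE)
    show "AE x in lborel. ennreal (f x) * indicator {..z} x = 0"
      using AE_lborel_singleton[of 0]
      by eventually_elim (use assms f_supp in \<open>auto split: split_indicator\<close>)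
  qed measurable
  finally have "measure law {..z} = 0"
    by (simp add: measure_def)
  then show ?thesis
    by (simp add: surv_def cdf_of_density_def)
qed

lemma surv_pos:
  assumes "0 \<le> z"
  shows "0 < surv z"
proof (rule ccontr)
  assume "\<not> 0 < surv z"
  then have "surv z = 0"
    using surv_nonneg[of z] by simp
  then have "hazard f z = 0"
    by (simp add: hazard_def surv_def)
  then show False using hazard_ge[OF assms] L_pos by simp
qed

lemma density_ge_surv:
  assumes "0 \<le> z"
  shows "L * surv z \<le> f z"
proof -
  have "L \<le> f z / surv z"
    using hazard_ge[OF assms] by (simp add: hazard_def surv_def)
  then show ?thesis
    using surv_pos[OF assms] by (simp add: field_simps)
qed

lemma surv_step:
  assumes "0 \<le> a" "a \<le> b"
  shows "surv b * (1 + L * (b - a)) \<le> surv a"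
proof -
  have "ennreal (L * surv b * (b - a)) = (\<integral>\<^sup>+x. ennreal (L * surv b) * indicator {a<..b} x \<partial>lborel)"
    using assms L_pos surv_nonneg[of b] by (simp add: nn_integral_cmult ennreal_mult')
  also have "\<dots> \<le> (\<integral>\<^sup>+x. ennreal (f x) * indicator {a<..b} x \<partial>lborel)"
  proof (intro nn_integral_mono)
    fix x
    show "ennreal (L * surv b) * indicator {a<..b} x \<le> ennreal (f x) * indicator {a<..b} x"
    proof (cases "x \<in> {a<..b}")
      case True
      then have "L * surv b \<le> L * surv x"
        using L_pos by (intro mult_left_mono surv_antimono) auto
      also have "\<dots> \<le> f x"
        using True assms by (intro density_ge_surv) auto
      finally show ?thesis
        using True by (simp add: ennreal_leI)
    qed simp
  qed
  also have "\<dots> = emeasure law {a<..b}"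
    by (simp add: emeasure_density)
  finally have "L * surv b * (b - a) \<le> measure law {a<..b}"
    by (simp add: F.emeasure_eq_measure)
  also have "measure law {a<..b} = surv a - surv b"
  proof -
    have "{a<..b} = {a<..} - {b<..}"
      using assms by auto
    then show ?thesis
      unfolding surv_eq_measure using assms by (simp only:) (subst F.finite_measure_Diff, auto)
  qed
  finally show ?thesis
    by (simp add: algebra_simps)
qed

lemma surv_iterate:
  assumes "0 \<le> a" "0 \<le> d"
  shows "surv (a + real j * d) * (1 + L * d) ^ j \<le> surv a"
proof (induction j)
  case 0
  then show ?case by simp
next
  case (Suc j)
  have "surv (a + real (Suc j) * d) * (1 + L * d) \<le> surv (a + real j * d)"
    using surv_step[of "a + real j * d" "a + real (Suc j) * d"] assms
    by (simp add: algebra_simps)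
  then have "surv (a + real (Suc j) * d) * (1 + L * d) ^ Suc j \<le> surv (a + real j * d) * (1 + L * d) ^ j"
    using L_pos assms by (simp add: mult.assoc[symmetric] mult_right_mono)
  then show ?case
    using Suc.IH by linarith
qed

lemma surv_exp_decay:
  assumes "0 \<le> a" "a \<le> b"
  shows "surv b * exp (L * (b - a)) \<le> surv a"
proof -
  have lim: "(\<lambda>m. surv b * (1 + L * (b - a) / real m) ^ m) \<longlonglongrightarrow> surv b * exp (L * (b - a))"
    by (intro tendsto_intros tendsto_exp_limit_sequentially)
  have "surv b * (1 + L * (b - a) / real m) ^ m \<le> surv a" for m
  proof (cases "m = 0")
    case True
    then show ?thesis
      using surv_antimono[OF assms(2)] by simp
  next
    case False
    have "surv (a + real m * ((b - a) / real m)) * (1 + L * ((b - a) / real m)) ^ m \<le> surv a"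
      using assms by (intro surv_iterate) auto
    then show ?thesis
      using False by simp
  qed
  then show ?thesis
    by (intro LIMSEQ_le_const2[OF lim]) auto
qed

text \<open>The quantile transform pushing the standard exponential law forward to \<open>law\<close>
  (see \<open>quantile_le_eq_atMost\<close>).\<close>

definition quantile :: "real \<Rightarrow> real" where
  "quantile w = Inf {z. 0 \<le> z \<and> surv z \<le> exp (- w)}"

lemma surv_le_exp:
  assumes "0 \<le> z"
  shows "surv z \<le> exp (- (L * z))"
proof -
  have "surv z * exp (L * z) \<le> 1"
    using surv_exp_decay[of 0 z] assms surv_eq_1[of 0] by simp
  then show ?thesis
    by (simp add: exp_minus field_simps)
qed

lemma quantile_set_nonempty: "{z. 0 \<le> z \<and> surv z \<le> exp (- w)} \<noteq> {}"
proof -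
  define z0 where "z0 = max 0 (w / L)"
  have "0 \<le> z0"
    by (simp add: z0_def)
  moreover have "w \<le> L * z0"
    using L_pos by (simp add: z0_def field_simps max_def)
  then have "surv z0 \<le> exp (- w)"
    using surv_le_exp[OF \<open>0 \<le> z0\<close>] by (smt (verit) exp_le_cancel_iff)
  ultimately show ?thesis
    by auto
qed

lemma quantile_nonneg: "0 \<le> quantile w"
  unfolding quantile_def using quantile_set_nonempty by (intro cInf_greatest) auto

lemma real_distribution_law: "real_distribution law"
  unfolding real_distribution_def real_distribution_axioms_def using f_prob by simp

lemma surv_eq_cdf: "surv z = 1 - cdf law z"
  by (simp add: surv_def cdf_of_density_def cdf_def)

lemma continuous_at_right_surv: "continuous (at_right a) surv"
proof -
  interpret real_distribution law by (rule real_distribution_law)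
  have "continuous (at_right a) (\<lambda>z. 1 - cdf law z)"
    by (intro continuous_intros cdf_is_right_cont)
  then show ?thesis
    unfolding surv_eq_cdf[abs_def] .
qed

lemma surv_quantile_le: "surv (quantile w) \<le> exp (- w)"
proof (rule ccontr)
  define p where "p = quantile w"
  assume "\<not> surv (quantile w) \<le> exp (- w)"
  then have gt: "exp (- w) < surv p"
    by (simp add: p_def)
  have "((\<lambda>z. surv z) \<longlongrightarrow> surv p) (at_right p)"
    using continuous_at_right_surv[of p] by (simp add: continuous_within)
  then have "eventually (\<lambda>z. exp (- w) < surv z) (at_right p)"
    using gt by (rule order_tendstoD(1))
  then obtain b where b: "b > p" "\<And>y. p < y \<Longrightarrow> y < b \<Longrightarrow> exp (- w) < surv y"
    by (auto simp: eventually_at_right_field)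
  have "b \<le> quantile w"
    unfolding quantile_def
  proof (rule cInf_greatest[OF quantile_set_nonempty])
    fix z assume z: "z \<in> {z. 0 \<le> z \<and> surv z \<le> exp (- w)}"
    show "b \<le> z"
    proof (rule ccontr)
      assume "\<not> b \<le> z"
      then have "z < b"
        by simp
      show False
      proof (cases "z \<le> p")
        case True
        then have "surv p \<le> surv z"
          by (rule surv_antimono)
        then show False using z gt by simp
      next
        case False
        then show False using b(2)[of z] \<open>z < b\<close> z by simp
      qed
    qed
  qed
  then show False using b(1) by (simp add: p_def)
qed

lemma quantile_le_iff:
  assumes "0 \<le> z"
  shows "quantile w \<le> z \<longleftrightarrow> surv z \<le> exp (- w)"
proof
  assume "quantile w \<le> z"
  then have "surv z \<le> surv (quantile w)"
    by (rule surv_antimono)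
  then show "surv z \<le> exp (- w)"
    using surv_quantile_le[of w] by simp
next
  assume "surv z \<le> exp (- w)"
  then show "quantile w \<le> z"
    unfolding quantile_def using assms by (intro cInf_lower bdd_belowI[where m=0]) auto
qed

lemma mono_quantile: "mono quantile"
proof (rule monoI)
  fix x y :: real assume "x \<le> y"
  have "surv (quantile y) \<le> exp (- x)"
    using surv_quantile_le[of y] \<open>x \<le> y\<close> by (smt (verit) exp_le_cancel_iff)
  then show "quantile x \<le> quantile y"
    using quantile_le_iff[OF quantile_nonneg] by simp
qed

lemma quantile_le_add:
  assumes "x \<le> y"
  shows "quantile y \<le> quantile x + (y - x) / L"
proof -
  define z where "z = quantile x + (y - x) / L"
  have z0: "0 \<le> z"
    using quantile_nonneg[of x] assms L_pos by (simp add: z_def)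
  have "surv z * exp (L * (z - quantile x)) \<le> surv (quantile x)"
    using quantile_nonneg[of x] assms L_pos by (intro surv_exp_decay) (auto simp: z_def)
  moreover have "L * (z - quantile x) = y - x"
    using L_pos by (simp add: z_def)
  ultimately have "surv z * exp (y - x) \<le> exp (- x)"
    using surv_quantile_le[of x] by simp
  then have "surv z \<le> exp (- y)"
    by (simp add: exp_diff exp_minus field_simps)
  then show ?thesis
    using quantile_le_iff[OF z0] by (simp add: z_def)
qed

lemma lipschitz_quantile: "(1 / L)-lipschitz_on UNIV quantile"
proof (rule lipschitz_onI)
  have le: "\<bar>quantile x - quantile y\<bar> \<le> 1 / L * \<bar>x - y\<bar>" if "x \<le> y" for x y
    using quantile_le_add[OF that] monoD[OF mono_quantile that] that by (simp add: abs_if)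
  show "dist (quantile x) (quantile y) \<le> 1 / L * dist x y" for x y
    using le[of x y] le[of y x] by (cases "x \<le> y") (auto simp: dist_real_def abs_minus_commute)
qed (use L_pos in simp)

lemma quantile_le_eq_atMost:
  assumes "0 \<le> z"
  shows "{w. quantile w \<le> z} = {..- ln (surv z)}"
proof -
  have "quantile w \<le> z \<longleftrightarrow> w \<le> - ln (surv z)" for w
  proof -
    have "quantile w \<le> z \<longleftrightarrow> surv z \<le> exp (- w)"
      by (rule quantile_le_iff[OF assms])
    also have "\<dots> \<longleftrightarrow> ln (surv z) \<le> - w"
      using surv_pos[OF assms] by (metis exp_le_cancel_iff exp_ln)
    finally show ?thesis
      by linarith
  qed
  then show ?thesis
    by auto
qed

end

section \<open>Order statistics as exceedance counts\<close>

lemma sorted_nth_le_iff_length_filter: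
  fixes S :: "real list"
  assumes "sorted S" "p < length S"
  shows "S ! p \<le> z \<longleftrightarrow> p < length (filter (\<lambda>v. v \<le> z) S)"
proof -
  have card: "length (filter (\<lambda>v. v \<le> z) S) = card {q. q < length S \<and> S ! q \<le> z}"
    by (rule length_filter_conv_card)
  show ?thesis
  proof
    assume "S ! p \<le> z"
    then have "{..p} \<subseteq> {q. q < length S \<and> S ! q \<le> z}"
      using assms by (auto intro: order_trans[OF sorted_nth_mono[OF assms(1)]])
    then have "card {..p} \<le> card {q. q < length S \<and> S ! q \<le> z}"
      by (intro card_mono) auto
    then show "p < length (filter (\<lambda>v. v \<le> z) S)"
      using card by simp
  next
    assume less: "p < length (filter (\<lambda>v. v \<le> z) S)"
    show "S ! p \<le> z"
    proof (rule ccontr)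
      assume "\<not> S ! p \<le> z"
      then have "{q. q < length S \<and> S ! q \<le> z} \<subseteq> {..<p}"
        using sorted_nth_mono[OF assms(1), of p] by (force simp: not_le)
      then have "card {q. q < length S \<and> S ! q \<le> z} \<le> card {..<p}"
        by (intro card_mono) auto
      then show False
        using less card by simp
    qed
  qed
qed

lemma order_stat_le_iff:
  assumes "1 \<le> k" "k \<le> n"
  shows "order_stat n k x \<le> z \<longleftrightarrow> card {i\<in>{..<n}. z < x i} < k"
proof -
  define S where "S = sort (map x [0..<n])"
  have os: "order_stat n k x = S ! (n - k)"
    unfolding order_stat_def S_def[symmetric] using assms by (simp add: rev_nth S_def)
  have count_le: "length (filter (\<lambda>v. v \<le> z) S) = card {i. i < n \<and> x i \<le> z}"
  proof -
    have "mset (filter (\<lambda>v. v \<le> z) S) = mset (filter (\<lambda>v. v \<le> z) (map x [0..<n]))"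
      by (simp add: S_def)
    then have "length (filter (\<lambda>v. v \<le> z) S) = length (filter (\<lambda>v. v \<le> z) (map x [0..<n]))"
      by (metis size_mset)
    also have "\<dots> = card {i. i < n \<and> x i \<le> z}"
      by (simp add: length_filter_conv_card) (intro arg_cong[where f=card] Collect_cong, auto)
    finally show ?thesis .
  qed
  have count_split: "card {i. i < n \<and> x i \<le> z} + card {i\<in>{..<n}. z < x i} = n"
  proof -
    have "{i. i < n \<and> x i \<le> z} \<union> {i\<in>{..<n}. z < x i} = {..<n}"
      by auto
    moreover have "card ({i. i < n \<and> x i \<le> z} \<union> {i\<in>{..<n}. z < x i}) =
        card {i. i < n \<and> x i \<le> z} + card {i\<in>{..<n}. z < x i}"
      by (intro card_Un_disjoint) auto
    ultimately show ?thesis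
      by simp
  qed
  have "order_stat n k x \<le> z \<longleftrightarrow> n - k < length (filter (\<lambda>v. v \<le> z) S)"
    unfolding os using assms by (intro sorted_nth_le_iff_length_filter) (auto simp: S_def)
  then show ?thesis
    using count_le count_split assms by linarith
qed

context prob_space
begin

lemma prob_exceedance_set:
  fixes Xs :: "nat \<Rightarrow> 'a \<Rightarrow> real"
  assumes indep: "indep_vars (\<lambda>_. borel) Xs {..<n}" and n: "1 \<le> n"
    and q: "\<And>i. i < n \<Longrightarrow> prob {\<omega> \<in> space M. z < Xs i \<omega>} = q"
    and S: "S \<subseteq> {..<n}"
  shows "{\<omega>\<in>space M. {i\<in>{..<n}. z < Xs i \<omega>} = S} \<in> events"
    and "prob {\<omega>\<in>space M. {i\<in>{..<n}. z < Xs i \<omega>} = S} = q ^ card S * (1 - q) ^ (n - card S)"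
proof -
  have rv [measurable]: "\<And>i. i < n \<Longrightarrow> Xs i \<in> borel_measurable M"
    using indep unfolding indep_vars_def by auto
  define A where "A i = Xs i -` (if i \<in> S then {z<..} else {..z}) \<inter> space M" for i
  have A_ev: "i < n \<Longrightarrow> A i \<in> events" for i
    unfolding A_def by (auto intro!: measurable_sets[OF rv])
  have eq: "{\<omega>\<in>space M. {i\<in>{..<n}. z < Xs i \<omega>} = S} = (\<Inter>i\<in>{..<n}. A i)"
    unfolding A_def using n S by (auto split: if_splits simp: lessThan_empty_iff)
  show "{\<omega>\<in>space M. {i\<in>{..<n}. z < Xs i \<omega>} = S} \<in> events"
    unfolding eq using n A_ev by (intro sets.finite_INT) (auto simp: lessThan_empty_iff)
  have prob_A: "prob (A i) = (if i \<in> S then q else 1 - q)" if i: "i < n" for i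
  proof (cases "i \<in> S")
    case True
    then have "A i = {\<omega> \<in> space M. z < Xs i \<omega>}"
      by (auto simp: A_def)
    then show ?thesis
      using True q[OF i] by simp
  next
    case False
    then have "A i = space M - {\<omega> \<in> space M. z < Xs i \<omega>}"
      by (auto simp: A_def)
    then show ?thesis
      using False q[OF i] prob_compl[of "{\<omega> \<in> space M. z < Xs i \<omega>}"] rv[OF i] by simp
  qed
  have "prob (\<Inter>i\<in>{..<n}. A i) = (\<Prod>i\<in>{..<n}. prob (A i))"
  proof (rule indep_setsD)
    show "indep_sets (\<lambda>i. sigma_sets (space M) {Xs i -` A \<inter> space M |A. A \<in> sets borel}) {..<n}"
      using indep unfolding indep_vars_def by auto
    show "\<forall>j\<in>{..<n}. A j \<in> sigma_sets (space M) {Xs j -` A \<inter> space M |A. A \<in> sets borel}"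
      unfolding A_def by (auto intro!: exI[of _ "if _ \<in> S then {z<..} else {..z}"])
  qed (use n in \<open>auto simp: lessThan_empty_iff\<close>)
  also have "\<dots> = (\<Prod>i\<in>{..<n}. if i \<in> S then q else 1 - q)"
    using prob_A by (intro prod.cong) auto
  also have "\<dots> = q ^ card S * (1 - q) ^ (n - card S)"
    using S by (subst prod.If_cases) (auto simp: Int_absorb1 Diff_eq[symmetric] card_Diff_subset
        finite_subset)
  finally show "prob {\<omega>\<in>space M. {i\<in>{..<n}. z < Xs i \<omega>} = S} = q ^ card S * (1 - q) ^ (n - card S)"
    unfolding eq .
qed

lemma prob_card_exceedances_less:
  fixes Xs :: "nat \<Rightarrow> 'a \<Rightarrow> real"
  assumes indep: "indep_vars (\<lambda>_. borel) Xs {..<n}" and n: "1 \<le> n"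
    and q: "\<And>i. i < n \<Longrightarrow> prob {\<omega> \<in> space M. z < Xs i \<omega>} = q"
  shows "{\<omega>\<in>space M. card {i\<in>{..<n}. z < Xs i \<omega>} < k} \<in> events"
    and "prob {\<omega>\<in>space M. card {i\<in>{..<n}. z < Xs i \<omega>} < k} = binomial_lower_tail n k q"
proof -
  define E where "E S = {\<omega>\<in>space M. {i\<in>{..<n}. z < Xs i \<omega>} = S}" for S
  define SS where "SS = {S. S \<subseteq> {..<n} \<and> card S < k}"
  have fin: "finite SS"
    unfolding SS_def by (rule finite_subset[of _ "Pow {..<n}"]) auto
  have E: "S \<in> SS \<Longrightarrow> E S \<in> events" "S \<in> SS \<Longrightarrow> prob (E S) = q ^ card S * (1 - q) ^ (n - card S)" for S
    unfolding E_def SS_def using prob_exceedance_set[OF indep n q] by auto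
  have U: "{\<omega>\<in>space M. card {i\<in>{..<n}. z < Xs i \<omega>} < k} = (\<Union>S\<in>SS. E S)"
    by (auto simp: E_def SS_def)
  show "{\<omega>\<in>space M. card {i\<in>{..<n}. z < Xs i \<omega>} < k} \<in> events"
    unfolding U using fin E by auto
  have "prob (\<Union>S\<in>SS. E S) = (\<Sum>S\<in>SS. prob (E S))"
    using fin E by (intro finite_measure_finite_Union) (auto simp: disjoint_family_on_def E_def)
  also have "\<dots> = (\<Sum>S\<in>SS. q ^ card S * (1 - q) ^ (n - card S))"
    using E by (intro sum.cong) auto
  also have "\<dots> = (\<Sum>j<k. \<Sum>S\<in>{S\<in>SS. card S = j}. q ^ card S * (1 - q) ^ (n - card S))"
    using fin by (intro sum.group[symmetric]) (auto simp: SS_def)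
  also have "\<dots> = binomial_lower_tail n k q"
    unfolding binomial_lower_tail_def
  proof (intro sum.cong refl)
    fix j assume "j \<in> {..<k}"
    then have "{S\<in>SS. card S = j} = {S. S \<subseteq> {..<n} \<and> card S = j}"
      by (auto simp: SS_def)
    then show "(\<Sum>S\<in>{S\<in>SS. card S = j}. q ^ card S * (1 - q) ^ (n - card S)) =
        real (n choose j) * q ^ j * (1 - q) ^ (n - j)"
      by (simp add: n_subsets mult.assoc)
  qed
  finally show "prob {\<omega>\<in>space M. card {i\<in>{..<n}. z < Xs i \<omega>} < k} = binomial_lower_tail n k q"
    unfolding U .
qed

end

section \<open>Concentration of the \<open>k\<close>-th largest sample\<close>

lemma Inf_hazard_le:
  assumes "prob_space (density lborel (\<lambda>t. ennreal (f t)))" "\<And>x. 0 \<le> f x" "0 \<le> x"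
  shows "(INF y\<in>{0..}. hazard f y) \<le> hazard f x"
proof -
  interpret prob_space "density lborel (\<lambda>t. ennreal (f t))"
    by fact
  have "0 \<le> hazard f y" for y
  proof -
    have "cdf_of_density f y \<le> 1"
      unfolding cdf_of_density_def by simp
    then show ?thesis
      unfolding hazard_def using assms(2)[of y] by simp
  qed
  then show ?thesis
    using assms(3) by (intro cINF_lower bdd_belowI[where m=0]) auto
qed

context hazard_lower_bound
begin

lemma measure_exp_order_stat_quantile_le:
  assumes "k \<le> n"
  shows "measure (exp_order_stat k n) {w. quantile w \<le> z} = binomial_lower_tail n k (surv z)"
proof (cases "0 \<le> z")
  case True
  have "0 < surv z" "surv z \<le> 1"
    using surv_pos[OF True] surv_le_1 by auto
  then show ?thesis
    using binomial_lower_tail_nonneg[of "surv z" n k] assms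
    by (simp add: quantile_le_eq_atMost[OF True] measure_def emeasure_exp_order_stat_atMost)
next
  case False
  then have "{w. quantile w \<le> z} = {}"
    using quantile_nonneg by (auto simp: not_le intro: less_le_trans)
  then show ?thesis
    using False surv_eq_1[of z] binomial_lower_tail_1[OF assms] by simp
qed

text \<open>The samples are \<open>quantile\<close> applied to i.i.d. standard exponentials, and \<open>quantile\<close> is
  monotone, so the \<open>k\<close>-th largest sample is \<open>quantile\<close> of the \<open>k\<close>-th largest exponential. We
  compare c.d.f.s: both sides are \<open>binomial_lower_tail n k (surv z)\<close>.\<close>

lemma distr_order_stat_eq_quantile:
  fixes Xs :: "nat \<Rightarrow> 'a \<Rightarrow> real"
  assumes "prob_space M" and indep: "prob_space.indep_vars M (\<lambda>_. borel) Xs {..<n}"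
    and rv: "\<And>i. i < n \<Longrightarrow> Xs i \<in> borel_measurable M"
    and distr: "\<And>i. i < n \<Longrightarrow> distr M borel (Xs i) = law"
    and k: "1 \<le> k" "k \<le> n"
  shows "(\<lambda>\<omega>. order_stat n k (\<lambda>i. Xs i \<omega>)) \<in> borel_measurable M"
    and "distr M borel (\<lambda>\<omega>. order_stat n k (\<lambda>i. Xs i \<omega>)) = distr (exp_order_stat k n) borel quantile"
proof -
  interpret M: prob_space M by fact
  interpret V: prob_space "exp_order_stat k n"
    by (rule prob_space_exp_order_stat[OF k])
  define Xk where "Xk \<omega> = order_stat n k (\<lambda>i. Xs i \<omega>)" for \<omega>
  have n: "1 \<le> n"
    using k by simp
  have q: "M.prob {\<omega> \<in> space M. z < Xs i \<omega>} = surv z" if i: "i < n" for z i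
  proof -
    have "M.prob {\<omega> \<in> space M. z < Xs i \<omega>} = measure (distr M borel (Xs i)) {z<..}"
      using rv[OF i] by (subst measure_distr) (auto intro!: arg_cong[where f="M.prob"])
    then show ?thesis
      unfolding distr[OF i] surv_eq_measure .
  qed
  have Xk_le: "{\<omega>\<in>space M. Xk \<omega> \<le> z} = {\<omega>\<in>space M. card {i\<in>{..<n}. z < Xs i \<omega>} < k}" for z
    using order_stat_le_iff[OF k] by (auto simp: Xk_def)
  show Xk_meas: "Xk \<in> borel_measurable M"
    unfolding borel_measurable_iff_le Xk_le using M.prob_card_exceedances_less(1)[OF indep n q] by blast
  have [measurable]: "quantile \<in> borel_measurable borel"
    by (rule borel_measurable_mono[OF mono_quantile])
  show "distr M borel Xk = distr (exp_order_stat k n) borel quantile"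
  proof (rule cdf_unique)
    show "real_distribution (distr M borel Xk)" "real_distribution (distr (exp_order_stat k n) borel quantile)"
      using Xk_meas by (auto simp: real_distribution_def real_distribution_axioms_def
          intro: M.prob_space_distr V.prob_space_distr)
    show "cdf (distr M borel Xk) = cdf (distr (exp_order_stat k n) borel quantile)"
    proof
      fix z
      have "cdf (distr M borel Xk) z = M.prob {\<omega>\<in>space M. Xk \<omega> \<le> z}"
        unfolding cdf_def using Xk_meas by (subst measure_distr) (auto intro!: arg_cong[where f="M.prob"])
      also have "\<dots> = binomial_lower_tail n k (surv z)"
        unfolding Xk_le by (rule M.prob_card_exceedances_less(2)[OF indep n q])
      also have "\<dots> = measure (exp_order_stat k n) {w. quantile w \<le> z}"
        by (rule measure_exp_order_stat_quantile_le[OF k(2), symmetric])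
      also have "\<dots> = cdf (distr (exp_order_stat k n) borel quantile) z"
        unfolding cdf_def by (subst measure_distr) (auto intro!: arg_cong[where f="measure _"])
      finally show "cdf (distr M borel Xk) z = cdf (distr (exp_order_stat k n) borel quantile) z" .
    qed
  qed
qed

lemma order_stat_mgf_le:
  assumes "prob_space M" and X: "X \<in> borel_measurable M"
    and law_X: "distr M borel X = distr (exp_order_stat k n) borel quantile"
    and k: "1 \<le> k" "k \<le> n" and l: "0 \<le> l"
  shows "integrable M (\<lambda>\<omega>. exp (l * ((\<integral>\<omega>. X \<omega> \<partial>M) - X \<omega>)))"
    and "(\<integral>\<omega>. exp (l * ((\<integral>\<omega>. X \<omega> \<partial>M) - X \<omega>)) \<partial>M)
      \<le> exp (l\<^sup>2 * (1 / L)\<^sup>2 * (\<Sum>j=k..n. 1 / (real j)\<^sup>2))"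
proof -
  interpret M: prob_space M by fact
  interpret V: prob_space "exp_order_stat k n"
    by (rule prob_space_exp_order_stat[OF k])
  have [measurable]: "quantile \<in> borel_measurable borel"
    by (rule borel_measurable_mono[OF mono_quantile])
  have transfer: "(\<integral>\<omega>. h (X \<omega>) \<partial>M) = (\<integral>w. h (quantile w) \<partial>exp_order_stat k n)"
    if [measurable]: "h \<in> borel_measurable borel" for h :: "real \<Rightarrow> real"
    using integral_distr[OF X, of h] integral_distr[of quantile "exp_order_stat k n" borel h]
    unfolding law_X by simp
  define c where "c = (\<integral>\<omega>. X \<omega> \<partial>M)"
  have c_eq: "c = (\<integral>w. quantile w \<partial>exp_order_stat k n)"
    unfolding c_def using transfer[of "\<lambda>x. x"] by simp
  have int: "integrable (exp_order_stat k n) (\<lambda>w. exp (l * (c - quantile w)))"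
    using quantile_nonneg l
    by (intro V.integrable_const_bound[where B="exp (l * c)"] AE_I2)
       (auto intro!: mult_left_mono simp: algebra_simps)
  have "integrable (distr M borel X) (\<lambda>x. exp (l * (c - x)))"
    unfolding law_X using int by (subst integrable_distr_eq) auto
  then show "integrable M (\<lambda>\<omega>. exp (l * ((\<integral>\<omega>. X \<omega> \<partial>M) - X \<omega>)))"
    using X by (subst (asm) integrable_distr_eq) (auto simp: c_def)
  have "ennreal (\<integral>w. exp (l * (c - quantile w)) \<partial>exp_order_stat k n) =
      (\<integral>\<^sup>+w. ennreal (exp (l * (c - quantile w))) \<partial>exp_order_stat k n)"
    using int by (intro nn_integral_eq_integral[symmetric]) auto
  also have "\<dots> \<le> ennreal (exp (l\<^sup>2 * (1 / L)\<^sup>2 * (\<Sum>j=k..n. 1 / (real j)\<^sup>2)))"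
    unfolding c_eq
    by (intro nn_integral_exp_order_stat_exp_le k l mono_quantile lipschitz_quantile)
  finally show "(\<integral>\<omega>. exp (l * ((\<integral>\<omega>. X \<omega> \<partial>M) - X \<omega>)) \<partial>M)
      \<le> exp (l\<^sup>2 * (1 / L)\<^sup>2 * (\<Sum>j=k..n. 1 / (real j)\<^sup>2))"
    using transfer[of "\<lambda>x. exp (l * (c - x))"] by (simp add: c_def)
qed

end

lemma (in prob_space) prob_lower_deviation_le:
  fixes Y :: "'a \<Rightarrow> real"
  assumes v: "0 < v" and gam: "0 \<le> gam"
    and int: "\<And>l. 0 \<le> l \<Longrightarrow> integrable M (\<lambda>x. exp (l * (c - Y x)))"
    and mgf: "\<And>l. 0 \<le> l \<Longrightarrow> expectation (\<lambda>x. exp (l * (c - Y x))) \<le> exp (l\<^sup>2 * v / 2)"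
  shows "prob {x \<in> space M. c - Y x \<ge> sqrt (2 * v * gam)} \<le> exp (- gam)"
proof (cases "gam = 0")
  case False
  then have gam: "0 < gam"
    using gam by simp
  define l where "l = sqrt (2 * gam / v)"
  define t where "t = sqrt (2 * v * gam)"
  have l_pos: "0 < l"
    using gam v by (simp add: l_def)
  have "set_integrable M (space M) (\<lambda>x. exp (l * (c - Y x)))"
    using int[of l] l_pos unfolding set_integrable_def
    by (intro integrable_mult_indicator[of "space M", simplified]) auto
  then have "prob {x \<in> space M. t \<le> c - Y x} \<le> exp (- l * t) * (\<integral>x\<in>space M. exp (l * (c - Y x)) \<partial>M)"
    by (intro Chernoff_ineq_ge l_pos) auto
  also have "\<dots> \<le> exp (- l * t) * exp (l\<^sup>2 * v / 2)"
    using mgf[of l] l_pos int[of l] by (simp add: set_integral_space)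
  also have "\<dots> = exp (- gam)"
  proof -
    have "l * t = sqrt ((2 * gam)\<^sup>2)"
      unfolding l_def t_def real_sqrt_mult[symmetric] using v
      by (intro arg_cong[where f=sqrt]) (simp add: field_simps power2_eq_square)
    then have "l * t = 2 * gam"
      using gam by (simp only: real_sqrt_abs)
    moreover have "l\<^sup>2 * v / 2 = gam"
      using gam v by (simp add: l_def)
    ultimately show ?thesis
      using gam by (simp add: exp_add[symmetric])
  qed
  finally show ?thesis
    by (simp add: t_def)
qed simp

lemma sum_inverse_squares_le:
  assumes "2 \<le> k" "L \<noteq> 0"
  shows "(1 / L)\<^sup>2 * (\<Sum>j=k..n. 1 / (real j)\<^sup>2) \<le> real (n - k + 1) / ((real k - 1)\<^sup>2 * L\<^sup>2)"
proof -
  have "(\<Sum>j=k..n. 1 / (real j)\<^sup>2) \<le> (\<Sum>j=k..n. 1 / (real k - 1)\<^sup>2)"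
    using assms by (intro sum_mono divide_left_mono power_mono) auto
  also have "\<dots> \<le> real (n - k + 1) / (real k - 1)\<^sup>2"
    by (cases "k \<le> n") (simp_all add: Suc_diff_le)
  finally have "(\<Sum>j=k..n. 1 / (real j)\<^sup>2) / L\<^sup>2 \<le> real (n - k + 1) / (real k - 1)\<^sup>2 / L\<^sup>2"
    by (rule divide_right_mono) simp
  then show ?thesis
    by (simp add: power_one_over divide_divide_eq_left)
qed

lemma ln_le_of_le_exp:
  fixes x y :: real
  assumes "0 \<le> x" "x \<le> exp y" "0 \<le> y"
  shows "ln x \<le> y"
  using assms ln_mono[of x "exp y"] by (cases "x = 0") auto

text \<open>Only \<open>hazard f \<ge> L\<close> on \<open>[0, \<infinity>)\<close> is used.\<close>

theorem lemma2:
  fixes M :: "'a measure" and Xs :: "nat \<Rightarrow> 'a \<Rightarrow> real"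
    and f :: "real \<Rightarrow> real" and n k :: nat and L :: real
  assumes "prob_space M"
    and f_meas: "f \<in> borel_measurable borel"
    and f_nonneg: "\<And>x. f x \<ge> 0"
    and f_supp: "\<And>x. x < 0 \<Longrightarrow> f x = 0"
    and f_prob: "prob_space (density lborel (\<lambda>t. ennreal (f t)))"
    and rv: "\<And>i. i < n \<Longrightarrow> Xs i \<in> borel_measurable M"
    and indep: "prob_space.indep_vars M (\<lambda>_. borel) Xs {..<n}"
    and distr: "\<And>i. i < n \<Longrightarrow> distr M borel (Xs i) = density lborel (\<lambda>t. ennreal (f t))"
    and IHR: "\<And>x1 x2. 0 \<le> x2 \<Longrightarrow> x2 \<le> x1 \<Longrightarrow> hazard f x2 \<le> hazard f x1"
    and L_def: "L = (INF x\<in>{0..}. hazard f x)"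
    and L_pos: "L > 0"
    and n: "n \<ge> 2"
    and k: "2 \<le> k" "k \<le> n"
  defines "Xk \<equiv> (\<lambda>\<omega>. order_stat n k (\<lambda>i. Xs i \<omega>))"
    and "vl \<equiv> 2 * real (n - k + 1) / ((real k - 1)^2 * L^2)"
  shows "(\<forall>lam::real\<ge>0. ln (prob_space.expectation M
              (\<lambda>\<omega>. exp (lam * (prob_space.expectation M Xk - Xk \<omega>))))
            \<le> lam^2 * vl / 2) \<and>
         (\<forall>gam::real\<ge>0. measure M {\<omega> \<in> space M.
              prob_space.expectation M Xk - Xk \<omega> \<ge> sqrt (2 * vl * gam)}
            \<le> exp (- gam))"
proof -
  interpret M: prob_space M by fact
  have hazard_ge: "L \<le> hazard f x" if "0 \<le> x" for x
    unfolding L_def by (rule Inf_hazard_le[OF f_prob f_nonneg that])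
  interpret hazard_lower_bound f L
    by (rule hazard_lower_bound.intro[OF f_meas f_supp f_prob hazard_ge L_pos])
  have k1: "1 \<le> k"
    using k by simp
  note Xk_law = distr_order_stat_eq_quantile[OF \<open>prob_space M\<close> indep rv distr k1 k(2), folded Xk_def]
  have vl_pos: "0 < vl"
    using k L_pos by (simp add: vl_def)
  have vl_half: "vl / 2 = real (n - k + 1) / ((real k - 1)\<^sup>2 * L\<^sup>2)"
    using k L_pos by (simp add: vl_def field_simps)
  have mgf: "M.expectation (\<lambda>\<omega>. exp (l * (M.expectation Xk - Xk \<omega>))) \<le> exp (l\<^sup>2 * vl / 2)"
    if "0 \<le> l" for l
  proof -
    have "l\<^sup>2 * ((1 / L)\<^sup>2 * (\<Sum>j=k..n. 1 / (real j)\<^sup>2)) \<le> l\<^sup>2 * (vl / 2)"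
      unfolding vl_half using sum_inverse_squares_le[OF k(1), of L n] L_pos
      by (intro mult_left_mono) simp_all
    then show ?thesis
      using order_stat_mgf_le(2)[OF \<open>prob_space M\<close> Xk_law k1 k(2) that]
      by (auto simp: mult.assoc intro: order_trans)
  qed
  show ?thesis
  proof (intro conjI allI impI)
    fix l :: real assume "0 \<le> l"
    then show "ln (M.expectation (\<lambda>\<omega>. exp (l * (M.expectation Xk - Xk \<omega>)))) \<le> l\<^sup>2 * vl / 2"
      using mgf vl_pos by (intro ln_le_of_le_exp Bochner_Integration.integral_nonneg) auto
  next
    fix gam :: real assume "0 \<le> gam"
    show "M.prob {\<omega> \<in> space M. M.expectation Xk - Xk \<omega> \<ge> sqrt (2 * vl * gam)} \<le> exp (- gam)"
      by (rule M.prob_lower_deviation_le[OF vl_pos \<open>0 \<le> gam\<close>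
          order_stat_mgf_le(1)[OF \<open>prob_space M\<close> Xk_law k1 k(2)] mgf])
  qed
qed

end
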